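(* Let $n,p\ge1$ be integers and let $A=A^{p+1}_{n+1}$ with order $\le$ and multiplication $\odot$ as defined in the context. For all $a,b,c\in A$, if $b\le c$ then $a\odot b\le a\odot c$.
   Context: Order $\mathbb{Z}\times\mathbb{Z}$ lexicographically: $(m,r)\preccurlyeq(k,s)$ iff $m<k$, or $m=k$ and $r\le s$; addition/subtraction of pairs is componentwise, and $\min,\max$ of pairs refer to $\preccurlyeq$. For an integer $n\ge1$ let $L^\omega_{n+1}=\{(m,r)\in\mathbb{Z}^2:(0,0)\preccurlyeq(m,r)\preccurlyeq(n,0)\}$ with $x\ast y=\max\{(0,0),x+y-(n,0)\}$ and $x\to y=\min\{(n,0),(n,0)-x+y\}$. For an integer $p\ge1$ let $L_{p+1}=\{0,1,\dots,p\}$ with $\alpha\ast\beta=\max\{0,\alpha+\beta-p\}$. Define $$A=A^{p+1}_{n+1}=\{\langle(m,r),\alpha\rangle:(m,r)\in L^\omega_{n+1},\ \alpha\in\{0,p\}\}\cup\{\langle(m,r),\alpha\rangle:(0,0)\preccurlyeq(m,r)\preccurlyeq(n-1,0),\ 0<\alpha<p\}.$$ Order: $\langle(m,r),\alpha\rangle\le\langle(k,s),\beta\rangle$ iff one of: (o1) $\alpha\neq0$, $\alpha\le\beta$ and $(m,r)\preccurlyeq(k,s)$; (o2) $\alpha=\beta=0$ and $(k,s)\preccurlyeq(m,r)$; (o3) $\alpha=0$, $\beta\ne0$ and $(n-1,0)\preccurlyeq(m+k,r+s)$. Put $\bot=\langle(n,0),0\rangle$, $\top=\langle(n,0),p\rangle$.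 For $a=\langle(m,r),\alpha\rangle$, $b=\langle(k,s),\beta\rangle\in A$ define $a\odot b$ by: (P1) if $\alpha,\beta\ge1$ and $\alpha+\beta>p$: $a\odot b=\langle(m,r)\ast(k,s),\alpha+\beta-p\rangle$; (P2) if $\alpha,\beta\ge1$ and $\alpha+\beta\le p$: $a\odot b=\langle\min\{(n,0),(2n-(m+k+1),-(r+s))\},0\rangle$; (P3) if $\alpha\ge1$, $\beta=0$: $a\odot b=\langle(m,r)\to(k,s),0\rangle$, and if $\alpha=0$, $\beta\ge1$: $a\odot b=\langle(k,s)\to(m,r),0\rangle$; (P4) if $\alpha=\beta=0$: $a\odot b=\langle\min\{(n,0),(m+k+1,r+s)\},0\rangle$. *)

theory Defs
  imports Main
begin

definition lex_le :: "int \<times> int \<Rightarrow> int \<times> int \<Rightarrow> bool" where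
  "lex_le x y \<longleftrightarrow> fst x < fst y \<or> (fst x = fst y \<and> snd x \<le> snd y)"

definition lex_min :: "int \<times> int \<Rightarrow> int \<times> int \<Rightarrow> int \<times> int" where
  "lex_min x y = (if lex_le x y then x else y)"

definition lex_max :: "int \<times> int \<Rightarrow> int \<times> int \<Rightarrow> int \<times> int" where
  "lex_max x y = (if lex_le x y then y else x)"

definition Lomega :: "int \<Rightarrow> (int \<times> int) set" where
  "Lomega n = {x. lex_le (0,0) x \<and> lex_le x (n,0)}"

definition lstar :: "int \<Rightarrow> int \<times> int \<Rightarrow> int \<times> int \<Rightarrow> int \<times> int" where
  "lstar n x y = lex_max (0,0) (fst x + fst y - n, snd x + snd y)"

definition limp :: "int \<Rightarrow> int \<times> int \<Rightarrow> int \<times> int \<Rightarrow> int \<times> int" where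
  "limp n x y = lex_min (n,0) (n - fst x + fst y, - snd x + snd y)"

definition Acar :: "int \<Rightarrow> int \<Rightarrow> ((int \<times> int) \<times> int) set" where
  "Acar n p = {(x, \<alpha>). x \<in> Lomega n \<and> (\<alpha> = 0 \<or> \<alpha> = p)}
            \<union> {(x, \<alpha>). lex_le (0,0) x \<and> lex_le x (n - 1, 0) \<and> 0 < \<alpha> \<and> \<alpha> < p}"

definition Ale :: "int \<Rightarrow> (int \<times> int) \<times> int \<Rightarrow> (int \<times> int) \<times> int \<Rightarrow> bool" where
  "Ale n a b = (case a of (x, \<alpha>) \<Rightarrow> case b of (y, \<beta>) \<Rightarrow>
      (\<alpha> \<noteq> 0 \<and> \<alpha> \<le> \<beta> \<and> lex_le x y)
    \<or> (\<alpha> = 0 \<and> \<beta> = 0 \<and> lex_le y x)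
    \<or> (\<alpha> = 0 \<and> \<beta> \<noteq> 0 \<and> lex_le (n - 1, 0) (fst x + fst y, snd x + snd y)))"

definition Aprod :: "int \<Rightarrow> int \<Rightarrow> (int \<times> int) \<times> int \<Rightarrow> (int \<times> int) \<times> int \<Rightarrow> (int \<times> int) \<times> int" where
  "Aprod n p a b = (case a of (x, \<alpha>) \<Rightarrow> case b of (y, \<beta>) \<Rightarrow>
     if \<alpha> \<ge> 1 \<and> \<beta> \<ge> 1 \<and> \<alpha> + \<beta> > p then (lstar n x y, \<alpha> + \<beta> - p)
     else if \<alpha> \<ge> 1 \<and> \<beta> \<ge> 1 \<and> \<alpha> + \<beta> \<le> p then
       (lex_min (n,0) (2*n - (fst x + fst y + 1), - (snd x + snd y)), 0)
     else if \<alpha> \<ge> 1 \<and> \<beta> = 0 then (limp n x y, 0)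
     else if \<alpha> = 0 \<and> \<beta> \<ge> 1 then (limp n y x, 0)
     else (lex_min (n,0) (fst x + fst y + 1, snd x + snd y), 0))"

end

theory Submission
  imports Defs "HOL-Library.Product_Lexorder" "HOL-Library.Product_Plus"
begin

text \<open>With the lexicographic order, \<open>\<int> \<times> \<int>\<close> is a linearly ordered abelian group, and every
  product in \<open>A\<close> is a min or max of \<open>(n,0)\<close> or \<open>(0,0)\<close> with an affine expression in the
  arguments. If \<open>b \<le> c\<close> holds by (o1) or (o2), the two products compare by monotonicity of
  these expressions, except when \<open>a \<odot> c\<close> has positive weight and \<open>a \<odot> b\<close> has not; that case,
  and all of (o3), come down to \<open>(n-1,0) \<preceq> y + z\<close> (resp. \<open>y \<preceq> z\<close>) via
  \<open>min N s + max 0 t \<ge> min N (s + t)\<close>.\<close>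

instance prod :: (linordered_ab_group_add, linordered_ab_group_add) linordered_ab_group_add
  by standard (auto simp: less_eq_prod_def)

lemma lex_le_eq_less_eq: "lex_le = (\<le>)"
  by (auto simp: fun_eq_iff lex_le_def less_eq_prod_def)

lemma lex_min_eq_min: "lex_min = min"
  by (auto simp: fun_eq_iff lex_min_def lex_le_eq_less_eq min_def)

lemma lex_max_eq_max: "lex_max = max"
  by (auto simp: fun_eq_iff lex_max_def lex_le_eq_less_eq max_def)

lemma lstar_eq: "lstar n x y = max 0 (x + y - (n, 0))"
  by (cases x, cases y) (simp add: lstar_def lex_max_eq_max zero_prod_def)

lemma limp_eq: "limp n x y = min (n, 0) ((n, 0) - x + y)"
  by (cases x, cases y) (simp add: limp_def lex_min_eq_min)

lemma min_add_max_ge: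
  fixes a b c d :: "'a::linordered_ab_group_add"
  shows "min (a + c) (b + d) \<le> min a b + max c d"
proof (cases "a \<le> b")
  case True
  have "min (a + c) (b + d) \<le> a + c" by simp
  also have "\<dots> \<le> a + max c d" by simp
  finally show ?thesis using True by (simp add: min_def)
next
  case False
  have "min (a + c) (b + d) \<le> b + d" by simp
  also have "\<dots> \<le> b + max c d" by simp
  finally show ?thesis using False by (simp add: min_def)
qed

lemma le_min_add_max:
  fixes t N a b :: "'a::linordered_ab_group_add"
  assumes "t \<le> N" and "t \<le> a + b"
  shows "t \<le> min N a + max 0 b"
proof -
  have "t \<le> min (N + 0) (a + b)" using assms by simp
  also have "\<dots> \<le> min N a + max 0 b" by (rule min_add_max_ge)
  finally show ?thesis .
qed

context
  fixes N u x y z :: "'a::linordered_ab_group_add"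
begin

lemma le_min_double_diff_add_max:
  assumes "0 \<le> u" and "y \<le> z"
  shows "N - u \<le> min N (N + N - (x + y + u)) + max 0 (x + z - N)"
  using assms by (intro le_min_add_max) (simp_all add: algebra_simps)

lemma le_min_diff_add_max:
  assumes "0 \<le> u" and "N - u \<le> y + z"
  shows "N - u \<le> min N (N - x + y) + max 0 (x + z - N)"
  using assms by (intro le_min_add_max) (simp_all add: algebra_simps)

lemma min_double_diff_le_min_diff:
  assumes "N - u \<le> y + z"
  shows "min N (N + N - (x + z + u)) \<le> min N (N - x + y)"
  using assms by (intro min.mono) (simp_all add: algebra_simps)

lemma min_diff_le_min_add:
  assumes "N - u \<le> y + z"
  shows "min N (N - z + x) \<le> min N (x + y + u)"
  using assms by (intro min.mono) (simp_all add: algebra_simps)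

end

lemma Ale_Pair_iff:
  "Ale n (y, \<beta>) (z, \<gamma>) \<longleftrightarrow>
     (\<beta> \<noteq> 0 \<and> \<beta> \<le> \<gamma> \<and> y \<le> z) \<or> (\<beta> = 0 \<and> \<gamma> = 0 \<and> z \<le> y)
   \<or> (\<beta> = 0 \<and> \<gamma> \<noteq> 0 \<and> (n - 1, 0) \<le> y + z)"
  by (cases y, cases z) (simp add: Ale_def lex_le_eq_less_eq)

lemma Aprod_Pair:
  "Aprod n p (x, \<alpha>) (y, \<beta>) =
    (if \<alpha> \<ge> 1 \<and> \<beta> \<ge> 1 \<and> \<alpha> + \<beta> > p then (max 0 (x + y - (n, 0)), \<alpha> + \<beta> - p)
     else if \<alpha> \<ge> 1 \<and> \<beta> \<ge> 1 then (min (n, 0) ((n, 0) + (n, 0) - (x + y + (1, 0))), 0)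
     else if \<alpha> \<ge> 1 \<and> \<beta> = 0 then (min (n, 0) ((n, 0) - x + y), 0)
     else if \<alpha> = 0 \<and> \<beta> \<ge> 1 then (min (n, 0) ((n, 0) - y + x), 0)
     else (min (n, 0) (x + y + (1, 0)), 0))"
  by (cases x, cases y) (simp add: Aprod_def lstar_eq limp_eq lex_min_eq_min)

lemma Aprod_right_mono_pos_weight:
  assumes "0 \<le> \<alpha>" and "1 \<le> \<beta>" and "\<beta> \<le> \<gamma>" and "y \<le> z"
  shows "Ale n (Aprod n p (x, \<alpha>) (y, \<beta>)) (Aprod n p (x, \<alpha>) (z, \<gamma>))"
proof -
  consider "\<alpha> = 0" | "1 \<le> \<alpha>" "p < \<alpha> + \<beta>" | "1 \<le> \<alpha>" "\<alpha> + \<beta> \<le> p" "p < \<alpha> + \<gamma>"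
    | "1 \<le> \<alpha>" "\<alpha> + \<gamma> \<le> p"
    using assms(1,3) by linarith
  then show ?thesis
  proof cases
    case 1
    have "min (n, 0) ((n, 0) - z + x) \<le> min (n, 0) ((n, 0) - y + x)"
      using assms(4) by (intro min.mono order_refl add_right_mono diff_left_mono)
    then show ?thesis using 1 assms by (simp add: Aprod_Pair Ale_Pair_iff)
  next
    case 2
    have "max 0 (x + y - (n, 0)) \<le> max 0 (x + z - (n, 0))"
      using assms(4) by (intro max.mono order_refl diff_right_mono add_left_mono)
    then show ?thesis using 2 assms by (simp add: Aprod_Pair Ale_Pair_iff)
  next
    case 3
    have "0 \<le> ((1, 0) :: int \<times> int)" by (simp add: zero_prod_def)
    then have "(n, 0) - (1, 0)
        \<le> min (n, 0) ((n, 0) + (n, 0) - (x + y + (1, 0))) + max 0 (x + z - (n, 0))"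
      using assms(4) by (rule le_min_double_diff_add_max)
    then show ?thesis using 3 assms by (simp add: Aprod_Pair Ale_Pair_iff)
  next
    case 4
    have "min (n, 0) ((n, 0) + (n, 0) - (x + z + (1, 0)))
        \<le> min (n, 0) ((n, 0) + (n, 0) - (x + y + (1, 0)))"
      using assms(4) by (intro min.mono order_refl diff_left_mono add_right_mono add_left_mono)
    then show ?thesis using 4 assms by (simp add: Aprod_Pair Ale_Pair_iff)
  qed
qed

lemma Aprod_right_mono_zero_weight:
  assumes "0 \<le> \<alpha>" and "z \<le> y"
  shows "Ale n (Aprod n p (x, \<alpha>) (y, 0)) (Aprod n p (x, \<alpha>) (z, 0))"
proof (cases "\<alpha> = 0")
  case True
  have "min (n, 0) (x + z + (1, 0)) \<le> min (n, 0) (x + y + (1, 0))"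
    using assms(2) by (intro min.mono order_refl add_right_mono add_left_mono)
  then show ?thesis using True by (simp add: Aprod_Pair Ale_Pair_iff)
next
  case False
  have "min (n, 0) ((n, 0) - x + z) \<le> min (n, 0) ((n, 0) - x + y)"
    using assms(2) by (intro min.mono order_refl add_left_mono)
  then show ?thesis using False assms(1) by (simp add: Aprod_Pair Ale_Pair_iff)
qed

lemma Aprod_right_mono_mixed_weight:
  assumes "0 \<le> \<alpha>" and "1 \<le> \<gamma>" and "(n - 1, 0) \<le> y + z"
  shows "Ale n (Aprod n p (x, \<alpha>) (y, 0)) (Aprod n p (x, \<alpha>) (z, \<gamma>))"
proof -
  have threshold: "(n, 0) - (1, 0) \<le> y + z"
    using assms(3) by simp
  consider "\<alpha> = 0" | "1 \<le> \<alpha>" "p < \<alpha> + \<gamma>" | "1 \<le> \<alpha>" "\<alpha> + \<gamma> \<le> p"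
    using assms(1) by linarith
  then show ?thesis
  proof cases
    case 1
    have "min (n, 0) ((n, 0) - z + x) \<le> min (n, 0) (x + y + (1, 0))"
      using threshold by (rule min_diff_le_min_add)
    then show ?thesis using 1 assms(2) by (simp add: Aprod_Pair Ale_Pair_iff)
  next
    case 2
    have "0 \<le> ((1, 0) :: int \<times> int)" by (simp add: zero_prod_def)
    then have "(n, 0) - (1, 0) \<le> min (n, 0) ((n, 0) - x + y) + max 0 (x + z - (n, 0))"
      using threshold by (rule le_min_diff_add_max)
    then show ?thesis using 2 assms(2) by (simp add: Aprod_Pair Ale_Pair_iff)
  next
    case 3
    have "min (n, 0) ((n, 0) + (n, 0) - (x + z + (1, 0))) \<le> min (n, 0) ((n, 0) - x + y)"
      using threshold by (rule min_double_diff_le_min_diff)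
    then show ?thesis using 3 assms(2) by (simp add: Aprod_Pair Ale_Pair_iff)
  qed
qed

lemma Aprod_right_mono:
  assumes "0 \<le> \<alpha>" and "0 \<le> \<beta>" and "0 \<le> \<gamma>" and "Ale n (y, \<beta>) (z, \<gamma>)"
  shows "Ale n (Aprod n p (x, \<alpha>) (y, \<beta>)) (Aprod n p (x, \<alpha>) (z, \<gamma>))"
proof -
  from assms(4) consider
      "1 \<le> \<beta>" "\<beta> \<le> \<gamma>" "y \<le> z"
    | "\<beta> = 0" "\<gamma> = 0" "z \<le> y"
    | "\<beta> = 0" "1 \<le> \<gamma>" "(n - 1, 0) \<le> y + z"
    using assms(2,3) by (auto simp: Ale_Pair_iff)
  then show ?thesis
    using assms(1)
    by cases (simp_all add: Aprod_right_mono_pos_weight Aprod_right_mono_zero_weight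
        Aprod_right_mono_mixed_weight)
qed

lemma Acar_weight_nonneg: "(x, \<alpha>) \<in> Acar n p \<Longrightarrow> 0 \<le> p \<Longrightarrow> 0 \<le> \<alpha>"
  by (auto simp: Acar_def)

theorem lemma2p2:
  fixes n p :: int and a b c :: "(int \<times> int) \<times> int"
  assumes "n \<ge> 1" and "p \<ge> 1"
    and "a \<in> Acar n p" and "b \<in> Acar n p" and "c \<in> Acar n p"
    and "Ale n b c"
  shows "Ale n (Aprod n p a b) (Aprod n p a c)"
proof -
  obtain x \<alpha> y \<beta> z \<gamma> where "a = (x, \<alpha>)" "b = (y, \<beta>)" "c = (z, \<gamma>)"
    by (cases a, cases b, cases c)
  moreover have "0 \<le> \<alpha>" "0 \<le> \<beta>" "0 \<le> \<gamma>"
    using assms(2-5) calculation by (auto intro: Acar_weight_nonneg)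
  ultimately show ?thesis
    using assms(6) by (simp add: Aprod_right_mono)
qed

end
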